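(* Let $U$ be a two-qubit unitary written as $$U=(u_A\otimes u_B)\exp\!\Big(i\sum_{k=1}^3 t_k\,\sigma_k\otimes\sigma_k\Big)(v_A^\dagger\otimes v_B^\dagger),$$ with $u_A,u_B,v_A,v_B$ single-qubit unitaries, $t_1,t_2,t_3\in\mathbb R$, and $\sigma_1,\sigma_2,\sigma_3$ the Pauli matrices. Then $U$ is a generalized thermal unitary if and only if there exist $j\neq k$ in $\{1,2,3\}$ with $(t_j-t_k)\bmod(\pi/2)=0$ or $(t_j+t_k)\bmod(\pi/2)=0$.
   Context: A unitary $U$ on $\mathcal H_A\otimes\mathcal H_B$ is a generalized thermal unitary if there exist Hermitian operators $H_A,H_A'$ on $\mathcal H_A$ and $H_B,H_B'$ on $\mathcal H_B$, with at least one of $H_A,H_B$ not proportional to the identity, such that $U(H_A\otimes\mathbb 1+\mathbb 1\otimes H_B)U^\dagger=H_A'\otimes\mathbb 1+\mathbb 1\otimes H_B'$. Here $\mathcal H_A=\mathcal H_B=\mathbb C^2$. *)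

theory Defs
  imports "HOL-Analysis.Analysis"
begin

type_synonym qmat = "complex^2^2"
type_synonym qqmat = "complex^(2\<times>2)^(2\<times>2)"

definition cadj :: "complex^'n^'n \<Rightarrow> complex^'n^'n" where
  "cadj A = (\<chi> i j. cnj (A $ j $ i))"

definition hermitian :: "complex^'n^'n \<Rightarrow> bool" where
  "hermitian A \<longleftrightarrow> cadj A = A"

definition unitary :: "complex^'n^'n \<Rightarrow> bool" where
  "unitary U \<longleftrightarrow> U ** cadj U = mat 1 \<and> cadj U ** U = mat 1"

definition cscale :: "complex \<Rightarrow> complex^'n^'m \<Rightarrow> complex^'n^'m" where
  "cscale c A = (\<chi> i j. c * A $ i $ j)"

definition prop_id :: "complex^'n^'n \<Rightarrow> bool" where
  "prop_id A \<longleftrightarrow> (\<exists>c. A = cscale c (mat 1))"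

definition kron :: "complex^'a^'a \<Rightarrow> complex^'b^'b \<Rightarrow> complex^('a\<times>'b)^('a\<times>'b)" where
  "kron A B = (\<chi> p q. A $ fst p $ fst q * B $ snd p $ snd q)"

primrec mpow :: "complex^'n^'n \<Rightarrow> nat \<Rightarrow> complex^'n^'n" where
  "mpow A 0 = mat 1"
| "mpow A (Suc m) = A ** mpow A m"

definition mexp :: "complex^'n^'n \<Rightarrow> complex^'n^'n" where
  "mexp A = (\<chi> i j. (\<Sum>m. mpow A m $ i $ j / of_nat (fact m)))"

definition pauli :: "nat \<Rightarrow> complex^2^2" where
  "pauli k = (\<chi> i j.
     if k = 1 then (if i \<noteq> j then 1 else 0)
     else if k = 2 then (if i = 0 \<and> j = 1 then - \<i> else if i = 1 \<and> j = 0 then \<i> else 0)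
     else (if i = 0 \<and> j = 0 then 1 else if i = 1 \<and> j = 1 then -1 else 0))"

definition gen_thermal_unitary :: "complex^('a::finite\<times>'b::finite)^('a\<times>'b) \<Rightarrow> bool" where
  "gen_thermal_unitary U \<longleftrightarrow> unitary U \<and>
     (\<exists>HA HA' :: complex^'a^'a. \<exists>HB HB' :: complex^'b^'b.
        hermitian HA \<and> hermitian HA' \<and> hermitian HB \<and> hermitian HB' \<and>
        (\<not> prop_id HA \<or> \<not> prop_id HB) \<and>
        U ** (kron HA (mat 1) + kron (mat 1) HB) ** cadj U
          = kron HA' (mat 1) + kron (mat 1) HB')"

end

theory Submission
  imports Defs
begin

(*
  In the magic basis the non-local part exp(i \<Sum>k t_k \<sigma>_k \<otimes> \<sigma>_k) is diagonal with phases
  exp(i \<theta>_a), \<theta>_a = \<plusminus>t_1 \<plusminus> t_2 \<plusminus> t_3, while conjugation into the magic basis maps the local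
  Hamiltonians H_A \<otimes> 1 + 1 \<otimes> H_B exactly onto the matrices c 1 + i R with c real and R real
  antisymmetric (su(2) \<oplus> su(2) = so(4)). Local unitaries do not matter, so U is generalized
  thermal iff some non-scalar matrix of this form keeps it after conjugation by diag(exp(i \<theta>_a)).
  That conjugation multiplies R_ab by exp(i (\<theta>_a - \<theta>_b)), so this happens iff
  sin (\<theta>_a - \<theta>_b) = 0 for some a \<noteq> b; the differences \<theta>_a - \<theta>_b are exactly \<plusminus>2 (t_j \<plusminus> t_k).
*)

lemma UNIV_2_eq: "(UNIV::2 set) = {0, 1}"
  using exhaust_2 by (metis UNIV_2 zero_neq_one insert_commute)

lemma UNIV_2x2_eq: "(UNIV::(2\<times>2) set) = {(0,0), (0,1), (1,0), (1,1)}"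
  by (auto simp: UNIV_2_eq simp flip: UNIV_Times_UNIV)

lemma sum_UNIV_2x2: "sum f (UNIV::(2\<times>2) set) = f (0,0) + f (0,1) + f (1,0) + f (1,1)"
  by (simp add: UNIV_2x2_eq add.assoc)

lemma forall_2x2: "(\<forall>a::2\<times>2. P a) \<longleftrightarrow> P (0,0) \<and> P (0,1) \<and> P (1,0) \<and> P (1,1)"
  by (metis UNIV_2x2_eq UNIV_I empty_iff insertE)

lemma ex_2x2: "(\<exists>a::2\<times>2. P a) \<longleftrightarrow> P (0,0) \<or> P (0,1) \<or> P (1,0) \<or> P (1,1)"
  using forall_2x2[of "\<lambda>a. \<not> P a"] by blast

lemma mat_2x2_eq_iff:
  "(A::'a^(2\<times>2)^(2\<times>2)) = B \<longleftrightarrow>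
    (\<forall>a\<in>{(0,0), (0,1), (1,0), (1,1)}. \<forall>b\<in>{(0,0), (0,1), (1,0), (1,1)}. A $ a $ b = B $ a $ b)"
  by (simp add: vec_eq_iff UNIV_2x2_eq[symmetric])

lemma cadj_cadj [simp]: "cadj (cadj A) = A"
  by (simp add: vec_eq_iff cadj_def)

lemma cadj_mult: "cadj (A ** B) = cadj B ** cadj (A::complex^'n^'n)"
  by (simp add: vec_eq_iff cadj_def matrix_matrix_mult_def mult.commute)

lemma cadj_add: "cadj (A + B) = cadj A + cadj B"
  by (simp add: vec_eq_iff cadj_def)

lemma cadj_mat1 [simp]: "cadj (mat 1 :: complex^'n^'n) = mat 1"
  by (simp add: vec_eq_iff cadj_def mat_def)

lemma cadj_cscale: "cadj (cscale c A) = cscale (cnj c) (cadj (A::complex^'n^'n))"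
  by (simp add: vec_eq_iff cadj_def cscale_def)

lemma cadj_kron: "cadj (kron A B) = kron (cadj A) (cadj B)"
  by (simp add: vec_eq_iff cadj_def kron_def)

lemma matrix_add_rdistrib: "(B + C) ** A = B ** A + C ** A"
  by (vector matrix_matrix_mult_def sum.distrib[symmetric] field_simps)

lemma cscale_mult_left: "cscale c A ** B = cscale c (A ** B)"
  by (simp add: vec_eq_iff cscale_def matrix_matrix_mult_def sum_distrib_left mult.assoc)

lemma cscale_mult_right: "A ** cscale c B = cscale c (A ** B)"
  by (simp add: vec_eq_iff cscale_def matrix_matrix_mult_def sum_distrib_left mult.left_commute)

lemma cscale_cscale: "cscale c (cscale d A) = cscale (c * d) A"
  by (simp add: vec_eq_iff cscale_def mult.assoc)

lemma cscale_one: "cscale 1 A = A"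
  by (simp add: vec_eq_iff cscale_def)

lemma hermitian_unitary_conj: "hermitian K \<Longrightarrow> hermitian (V ** K ** cadj V)"
  unfolding hermitian_def by (simp add: cadj_mult matrix_mul_assoc)

lemma hermitian_add: "hermitian A \<Longrightarrow> hermitian B \<Longrightarrow> hermitian (A + B)"
  unfolding hermitian_def by (simp add: cadj_add)

lemma hermitian_kron: "hermitian A \<Longrightarrow> hermitian B \<Longrightarrow> hermitian (kron A B)"
  unfolding hermitian_def by (simp add: cadj_kron)

lemma hermitian_mat1: "hermitian (mat 1 :: complex^'n^'n)"
  unfolding hermitian_def by simp

lemma hermitian_entry: "hermitian A \<Longrightarrow> A $ i $ j = cnj (A $ j $ i)"
  unfolding hermitian_def cadj_def by (metis vec_lambda_beta)

lemma unitary_mult: "unitary A \<Longrightarrow> unitary B \<Longrightarrow> unitary (A ** B)"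
  unfolding unitary_def
  by (metis (no_types, lifting) cadj_mult matrix_mul_assoc matrix_mul_rid)

lemma unitary_cadj: "unitary U \<Longrightarrow> unitary (cadj U)"
  unfolding unitary_def by simp

lemma unitary_conj_cancel:
  assumes "unitary U"
  shows "U ** (cadj U ** X ** U) ** cadj U = X" "cadj U ** (U ** X ** cadj U) ** U = X"
proof -
  have "U ** (cadj U ** X ** U) ** cadj U = (U ** cadj U) ** X ** (U ** cadj U)"
    "cadj U ** (U ** X ** cadj U) ** U = (cadj U ** U) ** X ** (cadj U ** U)"
    by (simp_all add: matrix_mul_assoc)
  with assms show "U ** (cadj U ** X ** U) ** cadj U = X" "cadj U ** (U ** X ** cadj U) ** U = X"
    unfolding unitary_def by simp_all
qed

lemma kron_mult: "kron A B ** kron C D = kron (A ** C) (B ** D)"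
  by (simp add: vec_eq_iff kron_def matrix_matrix_mult_def sum_product sum.cartesian_product
      case_prod_beta' mult_ac)

lemma kron_mat1: "kron (mat 1) (mat 1) = mat 1"
  by (simp add: vec_eq_iff kron_def mat_def prod_eq_iff)

lemma unitary_kron: "unitary A \<Longrightarrow> unitary B \<Longrightarrow> unitary (kron A B)"
  unfolding unitary_def by (simp add: cadj_kron kron_mult kron_mat1)

lemma hermitian_unitary_conj_iff:
  assumes "unitary U"
  shows "hermitian (U ** H ** cadj U) \<longleftrightarrow> hermitian H"
  by (metis assms hermitian_unitary_conj unitary_conj_cancel(2) cadj_cadj)

lemma prop_id_unitary_conj_iff:
  assumes "unitary U"
  shows "prop_id (U ** H ** cadj U) \<longleftrightarrow> prop_id H"
proof -
  have conj_scalar: "V ** cscale c (mat 1) ** cadj V = cscale c (mat 1)"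
    if "unitary V" for V :: "complex^'n^'n" and c
    using that unfolding unitary_def by (simp add: cscale_mult_left cscale_mult_right)
  show ?thesis
    unfolding prop_id_def
    by (metis assms conj_scalar unitary_conj_cancel(2))
qed

lemma if_zero_mult:
  fixes x y :: "'a::mult_zero"
  shows "(if P then x else 0) * y = (if P then x * y else 0)"
    "y * (if P then x else 0) = (if P then y * x else 0)"
  by simp_all

definition diag_mat :: "('n \<Rightarrow> complex) \<Rightarrow> complex^'n^'n" where
  "diag_mat d = (\<chi> i j. if i = j then d i else 0)"

lemma diag_mat_mult: "diag_mat d ** diag_mat e = diag_mat (\<lambda>i. d i * e i)"
  by (simp add: vec_eq_iff diag_mat_def matrix_matrix_mult_def if_zero_mult)

lemma diag_mat_1: "diag_mat (\<lambda>_. 1) = mat 1"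
  by (simp add: vec_eq_iff diag_mat_def mat_def)

lemma cadj_diag_mat: "cadj (diag_mat d) = diag_mat (\<lambda>i. cnj (d i))"
  by (simp add: vec_eq_iff diag_mat_def cadj_def)

lemma diag_mat_conj_entry:
  "(diag_mat d ** Y ** diag_mat e) $ a $ b = d a * Y $ a $ b * e b"
  by (simp add: diag_mat_def matrix_matrix_mult_def if_zero_mult)

lemma unitary_diag_mat: "(\<And>i. cmod (d i) = 1) \<Longrightarrow> unitary (diag_mat d)"
  unfolding unitary_def cadj_diag_mat diag_mat_mult
  by (simp add: complex_norm_square[symmetric] mult.commute diag_mat_1)

lemma mpow_unitary_conj_diag:
  assumes "unitary P"
  shows "mpow (P ** diag_mat d ** cadj P) m = P ** diag_mat (\<lambda>i. d i ^ m) ** cadj P"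
proof (induction m)
  case 0
  then show ?case using assms by (simp add: diag_mat_1 unitary_def)
next
  case (Suc m)
  have "mpow (P ** diag_mat d ** cadj P) (Suc m)
      = P ** diag_mat d ** (cadj P ** P) ** diag_mat (\<lambda>i. d i ^ m) ** cadj P"
    using Suc by (simp add: matrix_mul_assoc)
  also have "\<dots> = P ** (diag_mat d ** diag_mat (\<lambda>i. d i ^ m)) ** cadj P"
    using assms by (simp add: unitary_def matrix_mul_assoc)
  finally show ?case
    by (simp add: diag_mat_mult)
qed

lemma mexp_unitary_conj_diag:
  assumes "unitary P"
  shows "mexp (P ** diag_mat d ** cadj P) = P ** diag_mat (\<lambda>i. exp (d i)) ** cadj P"
proof -
  have entry:
    "(P ** diag_mat e ** cadj P) $ i $ j = (\<Sum>a\<in>UNIV. P $ i $ a * e a * cnj (P $ j $ a))" for e i j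
    by (simp add: matrix_matrix_mult_def diag_mat_def cadj_def if_zero_mult)
  have exp_sums: "(\<lambda>m. z ^ m / of_nat (fact m)) sums exp z" for z :: complex
    using exp_converges[of z] by (simp add: scaleR_conv_of_real divide_inverse mult.commute)
  have "(\<lambda>m. (P ** diag_mat (\<lambda>a. d a ^ m) ** cadj P) $ i $ j / of_nat (fact m)) sums
      (P ** diag_mat (\<lambda>a. exp (d a)) ** cadj P) $ i $ j" for i j
  proof -
    have "(\<lambda>m. P $ i $ a * (d a ^ m / of_nat (fact m)) * cnj (P $ j $ a)) sums
        (P $ i $ a * exp (d a) * cnj (P $ j $ a))" for a
      by (intro sums_mult sums_mult2 exp_sums)
    then have "(\<lambda>m. \<Sum>a\<in>UNIV. P $ i $ a * (d a ^ m / of_nat (fact m)) * cnj (P $ j $ a))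
        sums (\<Sum>a\<in>UNIV. P $ i $ a * exp (d a) * cnj (P $ j $ a))"
      by (rule sums_sum)
    then show ?thesis
      unfolding entry sum_divide_distrib by (simp add: field_simps)
  qed
  then show ?thesis
    unfolding mexp_def mpow_unitary_conj_diag[OF assms]
    by (simp add: vec_eq_iff sums_unique[symmetric])
qed

text \<open>For Hermitian \<open>Y\<close> this says \<open>Y = c 1 + i R\<close> with \<open>c\<close> real and \<open>R\<close> real antisymmetric.\<close>

definition const_diag_imag_offdiag :: "complex^'n^'n \<Rightarrow> bool" where
  "const_diag_imag_offdiag Y \<longleftrightarrow>
     (\<forall>a b. Y $ a $ a = Y $ b $ b) \<and> (\<forall>a b. a \<noteq> b \<longrightarrow> Re (Y $ a $ b) = 0)"

lemma prop_id_iff_offdiag_zero: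
  assumes "\<forall>a b. Y $ a $ a = Y $ b $ b"
  shows "prop_id Y \<longleftrightarrow> (\<forall>a b. a \<noteq> b \<longrightarrow> Y $ a $ b = 0)"
proof
  assume "\<forall>a b. a \<noteq> b \<longrightarrow> Y $ a $ b = 0"
  with assms have "Y = cscale (Y $ undefined $ undefined) (mat 1)"
    by (auto simp: vec_eq_iff cscale_def mat_def)
  then show "prop_id Y"
    unfolding prop_id_def by blast
qed (auto simp: prop_id_def cscale_def mat_def)

lemma ex_const_diag_imag_offdiag_diag_conj_iff:
  fixes d :: "'n::finite \<Rightarrow> complex"
  assumes unimodular: "\<And>a. cmod (d a) = 1"
  shows "(\<exists>Y. hermitian Y \<and> const_diag_imag_offdiag Y \<and> \<not> prop_id Y \<and>
            const_diag_imag_offdiag (diag_mat d ** Y ** cadj (diag_mat d)))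
    \<longleftrightarrow> (\<exists>a b. a \<noteq> b \<and> Im (d a * cnj (d b)) = 0)"
proof -
  have conj_entry:
    "(diag_mat d ** Y ** cadj (diag_mat d)) $ a $ b = Y $ a $ b * (d a * cnj (d b))" for Y a b
    by (simp add: cadj_diag_mat diag_mat_conj_entry mult_ac)
  have "d a * cnj (d a) = 1" for a
    using unimodular[of a] by (simp add: complex_norm_square[symmetric])
  then have conj_iff: "const_diag_imag_offdiag (diag_mat d ** Y ** cadj (diag_mat d)) \<longleftrightarrow>
      (\<forall>a b. Y $ a $ a = Y $ b $ b) \<and>
      (\<forall>a b. a \<noteq> b \<longrightarrow> Re (Y $ a $ b * (d a * cnj (d b))) = 0)" for Y
    unfolding const_diag_imag_offdiag_def conj_entry by simp
  show ?thesis
  proof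
    assume "\<exists>Y. hermitian Y \<and> const_diag_imag_offdiag Y \<and> \<not> prop_id Y \<and>
        const_diag_imag_offdiag (diag_mat d ** Y ** cadj (diag_mat d))"
    then obtain Y where Y: "const_diag_imag_offdiag Y" "\<not> prop_id Y"
      "const_diag_imag_offdiag (diag_mat d ** Y ** cadj (diag_mat d))"
      by blast
    have "\<forall>a b. Y $ a $ a = Y $ b $ b"
      using Y(1) unfolding const_diag_imag_offdiag_def by (rule conjunct1)
    then obtain a b where "a \<noteq> b" "Y $ a $ b \<noteq> 0"
      using Y(2) prop_id_iff_offdiag_zero[of Y] by blast
    moreover have "Re (Y $ a $ b) = 0"
      using Y(1) \<open>a \<noteq> b\<close> unfolding const_diag_imag_offdiag_def by simp
    moreover have "Re (Y $ a $ b * (d a * cnj (d b))) = 0"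
      using Y(3) \<open>a \<noteq> b\<close> unfolding conj_iff by simp
    ultimately have "Im (d a * cnj (d b)) = 0"
      by (simp add: complex_eq_iff)
    with \<open>a \<noteq> b\<close> show "\<exists>a b. a \<noteq> b \<and> Im (d a * cnj (d b)) = 0"
      by blast
  next
    assume "\<exists>a b. a \<noteq> b \<and> Im (d a * cnj (d b)) = 0"
    then obtain a b where "a \<noteq> b" and real_ab: "Im (d a * cnj (d b)) = 0"
      by blast
    have "Im (d b * cnj (d a)) = - Im (d a * cnj (d b))"
      by (simp add: algebra_simps)
    with real_ab have real_ba: "Im (d b * cnj (d a)) = 0"
      by simp
    define Y :: "complex^'n^'n" where
      "Y = (\<chi> i j. if i = a \<and> j = b then \<i> else if i = b \<and> j = a then - \<i> else 0)"
    have diag: "\<forall>i j. Y $ i $ i = Y $ j $ j"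
      using \<open>a \<noteq> b\<close> by (simp add: Y_def)
    have "hermitian Y"
      using \<open>a \<noteq> b\<close> by (auto simp: hermitian_def cadj_def vec_eq_iff Y_def)
    moreover have "const_diag_imag_offdiag Y"
      using diag by (simp add: const_diag_imag_offdiag_def Y_def)
    moreover have "\<not> prop_id Y"
      using \<open>a \<noteq> b\<close> by (simp add: prop_id_iff_offdiag_zero[OF diag]) (auto simp: Y_def)
    moreover have "const_diag_imag_offdiag (diag_mat d ** Y ** cadj (diag_mat d))"
      using diag real_ab real_ba by (simp add: conj_iff Y_def)
    ultimately show "\<exists>Y. hermitian Y \<and> const_diag_imag_offdiag Y \<and> \<not> prop_id Y \<and>
        const_diag_imag_offdiag (diag_mat d ** Y ** cadj (diag_mat d))"
      by blast
  qed
qed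

section \<open>Local Hamiltonians\<close>

definition local_hamiltonian :: "complex^('a::finite\<times>'b::finite)^('a\<times>'b) \<Rightarrow> bool" where
  "local_hamiltonian X \<longleftrightarrow>
     (\<exists>A B. hermitian A \<and> hermitian B \<and> X = kron A (mat 1) + kron (mat 1) B)"

lemma local_hamiltonian_hermitian: "local_hamiltonian X \<Longrightarrow> hermitian X"
  unfolding local_hamiltonian_def by (auto intro: hermitian_add hermitian_kron hermitian_mat1)

lemma prop_id_local_sum_iff:
  "prop_id (kron A (mat 1) + kron (mat 1) B) \<longleftrightarrow> prop_id A \<and> prop_id B"
proof
  assume "prop_id (kron A (mat 1) + kron (mat 1) B)"
  then obtain c where c: "kron A (mat 1) + kron (mat 1) B = cscale c (mat 1)"
    unfolding prop_id_def by blast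
  have entry: "A $ i $ j * (if k = l then 1 else 0) + (if i = j then 1 else 0) * B $ k $ l
      = (if i = j \<and> k = l then c else 0)" for i j k l
    using arg_cong[OF c, of "\<lambda>M. M $ (i, k) $ (j, l)"]
    by (simp add: kron_def mat_def cscale_def)
  have "A $ i $ j = (if i = j then c - B $ undefined $ undefined else 0)" for i j
    using entry[of i j undefined undefined] by (cases "i = j") (simp_all add: eq_diff_eq)
  then have "A = cscale (c - B $ undefined $ undefined) (mat 1)"
    by (simp add: vec_eq_iff cscale_def mat_def)
  moreover have "B $ k $ l = (if k = l then c - A $ undefined $ undefined else 0)" for k l
    using entry[of undefined undefined k l]
    by (cases "k = l") (simp_all add: eq_diff_eq add.commute)
  then have "B = cscale (c - A $ undefined $ undefined) (mat 1)"
    by (simp add: vec_eq_iff cscale_def mat_def)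
  ultimately show "prop_id A \<and> prop_id B"
    unfolding prop_id_def by blast
next
  assume "prop_id A \<and> prop_id B"
  then obtain a b where "A = cscale a (mat 1)" "B = cscale b (mat 1)"
    unfolding prop_id_def by blast
  then have "kron A (mat 1) + kron (mat 1) B = cscale (a + b) (mat 1)"
    by (simp add: vec_eq_iff kron_def cscale_def mat_def prod_eq_iff distrib_right)
  then show "prop_id (kron A (mat 1) + kron (mat 1) B)"
    unfolding prop_id_def by blast
qed

lemma gen_thermal_unitary_iff_local_hamiltonian:
  "gen_thermal_unitary U \<longleftrightarrow> unitary U \<and>
     (\<exists>X. local_hamiltonian X \<and> \<not> prop_id X \<and> local_hamiltonian (U ** X ** cadj U))"
  unfolding gen_thermal_unitary_def local_hamiltonian_def
  by (fastforce simp: prop_id_local_sum_iff)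

lemma local_hamiltonian_kron_conj:
  assumes "unitary A" "unitary B" "local_hamiltonian X"
  shows "local_hamiltonian (kron A B ** X ** cadj (kron A B))"
proof -
  obtain HA HB where H: "hermitian HA" "hermitian HB" "X = kron HA (mat 1) + kron (mat 1) HB"
    using assms(3) unfolding local_hamiltonian_def by blast
  have "kron A B ** X ** cadj (kron A B)
      = kron (A ** HA ** cadj A) (mat 1) + kron (mat 1) (B ** HB ** cadj B)"
    using assms(1,2) unfolding H(3) unitary_def cadj_kron matrix_add_ldistrib matrix_add_rdistrib
    by (simp add: kron_mult matrix_mul_assoc)
  with H(1,2) show ?thesis
    unfolding local_hamiltonian_def by (blast intro: hermitian_unitary_conj)
qed

lemma gen_thermal_unitary_kron_mult:
  assumes "unitary A" "unitary B" "unitary C" "unitary D" "gen_thermal_unitary V"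
  shows "gen_thermal_unitary (kron A B ** V ** kron C D)"
proof -
  obtain X where X: "local_hamiltonian X" "\<not> prop_id X" "local_hamiltonian (V ** X ** cadj V)"
    and "unitary V"
    using assms(5) unfolding gen_thermal_unitary_iff_local_hamiltonian by blast
  let ?W = "kron C D"
  let ?U = "kron A B ** V ** ?W"
  have W: "unitary ?W" "unitary (cadj ?W)" "cadj ?W = kron (cadj C) (cadj D)"
    using assms(3,4) by (simp_all add: unitary_kron unitary_cadj cadj_kron)
  have cancel: "M ** ?W ** cadj ?W = M" for M :: "complex^('a\<times>'b)^('a\<times>'b)"
    using W(1) by (simp add: unitary_def flip: matrix_mul_assoc)
  have "?U ** (cadj ?W ** X ** ?W) ** cadj ?U
      = kron A B ** (V ** X ** cadj V) ** cadj (kron A B)"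
    by (simp add: cadj_mult matrix_mul_assoc cancel)
  then have "local_hamiltonian (?U ** (cadj ?W ** X ** ?W) ** cadj ?U)"
    using local_hamiltonian_kron_conj[OF assms(1,2) X(3)] by simp
  moreover have "local_hamiltonian (cadj ?W ** X ** ?W)"
    using local_hamiltonian_kron_conj[OF unitary_cadj unitary_cadj X(1)] assms(3,4) W(3)
    by (metis cadj_cadj)
  moreover have "\<not> prop_id (cadj ?W ** X ** ?W)"
    using prop_id_unitary_conj_iff[OF W(2)] X(2) by simp
  moreover have "unitary ?U"
    using assms \<open>unitary V\<close> by (simp add: unitary_mult unitary_kron)
  ultimately show ?thesis
    unfolding gen_thermal_unitary_iff_local_hamiltonian by blast
qed

lemma gen_thermal_unitary_local_unitaries_iff:
  assumes "unitary uA" "unitary uB" "unitary vA" "unitary vB"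
  shows "gen_thermal_unitary (kron uA uB ** V ** kron (cadj vA) (cadj vB)) \<longleftrightarrow>
    gen_thermal_unitary V"
proof
  have "kron (cadj uA) (cadj uB) ** (kron uA uB ** V ** kron (cadj vA) (cadj vB)) ** kron vA vB
      = kron (cadj uA ** uA) (cadj uB ** uB) ** V ** kron (cadj vA ** vA) (cadj vB ** vB)"
    by (simp add: matrix_mul_assoc kron_mult flip: kron_mult)
  also have "\<dots> = V"
    using assms unfolding unitary_def by (simp add: kron_mat1)
  finally show "gen_thermal_unitary V"
    if "gen_thermal_unitary (kron uA uB ** V ** kron (cadj vA) (cadj vB))"
    using gen_thermal_unitary_kron_mult[of "cadj uA" "cadj uB" vA vB, OF _ _ _ _ that] assms
    by (simp add: unitary_cadj)
next
  show "gen_thermal_unitary V \<Longrightarrow>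
      gen_thermal_unitary (kron uA uB ** V ** kron (cadj vA) (cadj vB))"
    using assms by (simp add: gen_thermal_unitary_kron_mult unitary_cadj)
qed

section \<open>The magic basis\<close>

text \<open>The columns are the (unnormalised) magic basis
  \<open>|00\<rangle> + |11\<rangle>, i(|00\<rangle> - |11\<rangle>), i(|01\<rangle> + |10\<rangle>), |01\<rangle> - |10\<rangle>\<close>.\<close>

definition magic0 :: "complex^(2\<times>2)^(2\<times>2)" where
  "magic0 = (\<chi> p k.
     if k = (0,0) then (if p = (0,0) \<or> p = (1,1) then 1 else 0)
     else if k = (0,1) then (if p = (0,0) then \<i> else if p = (1,1) then - \<i> else 0)
     else if k = (1,0) then (if p = (0,1) \<or> p = (1,0) then \<i> else 0)
     else (if p = (0,1) then 1 else if p = (1,0) then -1 else 0))"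

definition magic :: "complex^(2\<times>2)^(2\<times>2)" where
  "magic = cscale (of_real (1 / sqrt 2)) magic0"

lemmas magic0_simps = magic0_def cadj_def matrix_matrix_mult_def sum_UNIV_2x2 kron_def mat_def
  cscale_def

lemma magic0_cadj_mult:
  "magic0 ** cadj magic0 = cscale 2 (mat 1)" "cadj magic0 ** magic0 = cscale 2 (mat 1)"
  unfolding mat_2x2_eq_iff by (simp_all add: magic0_simps)

lemma magic_conj:
  "cadj magic ** X ** magic = cscale (1/2) (cadj magic0 ** X ** magic0)"
  "magic ** X ** cadj magic = cscale (1/2) (magic0 ** X ** cadj magic0)"
  by (simp_all add: magic_def cadj_cscale cscale_mult_left cscale_mult_right cscale_cscale
      flip: of_real_mult)

lemma unitary_magic: "unitary magic"
  using magic_conj[of "mat 1"] unfolding unitary_def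
  by (simp add: magic0_cadj_mult cscale_cscale cscale_one)

lemma hermitian_imp_const_diag_imag_offdiag_magic:
  assumes "hermitian A" "hermitian B"
  shows "const_diag_imag_offdiag (cadj magic ** (kron A (mat 1) + kron (mat 1) B) ** magic)"
proof -
  have "A $ 1 $ 0 = cnj (A $ 0 $ 1)" "B $ 1 $ 0 = cnj (B $ 0 $ 1)"
    using assms hermitian_entry by blast+
  moreover have "Im (A $ i $ i) = 0" "Im (B $ i $ i) = 0" for i
    using hermitian_entry[OF assms(1), of i i] hermitian_entry[OF assms(2), of i i]
    by (simp_all add: complex_eq_iff)
  ultimately show ?thesis
    unfolding const_diag_imag_offdiag_def magic_conj forall_2x2
    by (simp add: magic0_simps complex_eq_iff algebra_simps)
qed

lemma local_hamiltonian_if_const_diag_imag_offdiag_magic: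
  assumes herm: "hermitian X" and Y: "const_diag_imag_offdiag (cadj magic ** X ** magic)"
  shows "local_hamiltonian X"
proof -
  define Y where "Y = cadj magic ** X ** magic"
  have "hermitian Y"
    using hermitian_unitary_conj[OF herm, of "cadj magic"] by (simp add: Y_def)
  have "Re (Y $ a $ b) = 0" if "a \<noteq> b" for a b
    using Y that unfolding Y_def const_diag_imag_offdiag_def by blast
  then have skew: "Y $ b $ a = - Y $ a $ b" if "a \<noteq> b" for a b
    using that hermitian_entry[OF \<open>hermitian Y\<close>, of b a] by (simp add: complex_eq_iff)
  have diag: "Y $ a $ a = Y $ (0,0) $ (0,0)" for a
    using Y unfolding Y_def const_diag_imag_offdiag_def by blast
  have X: "X = cscale (1/2) (magic0 ** Y ** cadj magic0)"
    using unitary_conj_cancel(1)[OF unitary_magic, of X] by (simp add: Y_def magic_conj)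
  define A :: "complex^2^2" where "A = (\<chi> i j. X $ (i,0) $ (j,0))"
  define B :: "complex^2^2" where
    "B = (\<chi> k l. X $ (0,k) $ (0,l) - (if k = l then X $ (0,0) $ (0,0) else 0))"
  have "cnj (X $ i $ j) = X $ j $ i" for i j
    using hermitian_entry[OF herm, of j i] by simp
  then have "hermitian A" "hermitian B"
    by (simp_all add: hermitian_def cadj_def vec_eq_iff A_def B_def)
  moreover have "X = kron A (mat 1) + kron (mat 1) B"
    unfolding A_def B_def X mat_2x2_eq_iff
    by (simp add: magic0_simps diag[of "(0,1)"] diag[of "(1,0)"] diag[of "(1,1)"]
        skew[of "(0,0)" "(0,1)"] skew[of "(0,0)" "(1,0)"] skew[of "(0,0)" "(1,1)"]
        skew[of "(0,1)" "(1,0)"] skew[of "(0,1)" "(1,1)"] skew[of "(1,0)" "(1,1)"] field_simps)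
  ultimately show ?thesis
    unfolding local_hamiltonian_def by blast
qed

lemma local_hamiltonian_magic_conj_iff:
  "local_hamiltonian (magic ** Y ** cadj magic) \<longleftrightarrow>
    hermitian Y \<and> const_diag_imag_offdiag Y"
proof -
  have Y: "cadj magic ** (magic ** Y ** cadj magic) ** magic = Y"
    by (rule unitary_conj_cancel(2)[OF unitary_magic])
  show ?thesis
  proof
    assume "local_hamiltonian (magic ** Y ** cadj magic)"
    then obtain A B where "hermitian A" "hermitian B"
      "magic ** Y ** cadj magic = kron A (mat 1) + kron (mat 1) B"
      unfolding local_hamiltonian_def by blast
    then show "hermitian Y \<and> const_diag_imag_offdiag Y"
      using hermitian_imp_const_diag_imag_offdiag_magic[of A B] Y
        local_hamiltonian_hermitian[OF \<open>local_hamiltonian _\<close>]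
        hermitian_unitary_conj_iff[OF unitary_magic] by metis
  next
    assume "hermitian Y \<and> const_diag_imag_offdiag Y"
    then show "local_hamiltonian (magic ** Y ** cadj magic)"
      using local_hamiltonian_if_const_diag_imag_offdiag_magic Y
        hermitian_unitary_conj_iff[OF unitary_magic] by metis
  qed
qed

lemma gen_thermal_unitary_magic_diag_iff:
  assumes unimodular: "\<And>a. cmod (d a) = 1"
  shows "gen_thermal_unitary (magic ** diag_mat d ** cadj magic)
    \<longleftrightarrow> (\<exists>a b. a \<noteq> b \<and> Im (d a * cnj (d b)) = 0)"
proof -
  let ?D = "diag_mat d"
  let ?V = "magic ** ?D ** cadj magic"
  have "unitary ?V"
    using unitary_magic unitary_diag_mat[of d, OF unimodular]
    by (simp add: unitary_mult unitary_cadj)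
  have cancel: "M ** cadj magic ** magic = M" for M :: "complex^(2\<times>2)^(2\<times>2)"
    using unitary_magic by (simp add: unitary_def flip: matrix_mul_assoc)
  have V_conj:
    "?V ** (magic ** Y ** cadj magic) ** cadj ?V = magic ** (?D ** Y ** cadj ?D) ** cadj magic"
    for Y
    by (simp add: cadj_mult matrix_mul_assoc cancel)
  have "(\<exists>X. local_hamiltonian X \<and> \<not> prop_id X \<and> local_hamiltonian (?V ** X ** cadj ?V))
      \<longleftrightarrow> (\<exists>Y. local_hamiltonian (magic ** Y ** cadj magic) \<and>
              \<not> prop_id (magic ** Y ** cadj magic) \<and>
              local_hamiltonian (?V ** (magic ** Y ** cadj magic) ** cadj ?V))"
    by (metis unitary_conj_cancel(1)[OF unitary_magic])
  also have "\<dots> \<longleftrightarrow> (\<exists>Y. hermitian Y \<and> const_diag_imag_offdiag Y \<and> \<not> prop_id Y \<and>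
      const_diag_imag_offdiag (?D ** Y ** cadj ?D))"
    unfolding V_conj local_hamiltonian_magic_conj_iff prop_id_unitary_conj_iff[OF unitary_magic]
    by (auto intro: hermitian_unitary_conj)
  finally show ?thesis
    unfolding gen_thermal_unitary_iff_local_hamiltonian
      ex_const_diag_imag_offdiag_diag_conj_iff[OF unimodular]
    using \<open>unitary ?V\<close> by blast
qed

section \<open>The phases of the non-local part\<close>

text \<open>The eigenvalue of \<open>\<Sum>k t_k \<sigma>_k \<otimes> \<sigma>_k\<close> on the magic basis vector \<open>a\<close>.\<close>

definition magic_phase :: "(nat \<Rightarrow> real) \<Rightarrow> 2\<times>2 \<Rightarrow> real" where
  "magic_phase t a =
     (if a = (0,0) then t 1 - t 2 + t 3 else if a = (0,1) then - t 1 + t 2 + t 3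
      else if a = (1,0) then t 1 + t 2 - t 3 else - t 1 - t 2 - t 3)"

lemma pauli_sum_magic_diag:
  "(\<Sum>k\<in>{1..3}. cscale (\<i> * complex_of_real (t k)) (kron (pauli k) (pauli k)))
     = magic ** diag_mat (\<lambda>a. \<i> * complex_of_real (magic_phase t a)) ** cadj magic"
proof -
  have "{1..3::nat} = {1, 2, 3}"
    by auto
  then show ?thesis
    unfolding magic_conj
    by (simp add: mat_2x2_eq_iff magic0_simps diag_mat_def pauli_def magic_phase_def
        field_simps)
qed

lemma ex_int_multiple_half_pi_iff:
  "(\<exists>n::int. u = of_int n * (pi / 2)) \<longleftrightarrow> sin (2 * u) = 0"
proof -
  have "(\<exists>n::int. u = of_int n * (pi / 2)) \<longleftrightarrow> (\<exists>n::int. 2 * u = of_int n * pi)"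
    by (intro ex_cong1) (auto simp: field_simps)
  then show ?thesis
    by (simp add: sin_zero_iff_int2)
qed

lemma sin_diff_eq_0_commute: "sin (x - y) = 0 \<longleftrightarrow> sin (y - x) = 0"
  by (metis minus_diff_eq neg_equal_0_iff_equal sin_minus)

lemma magic_phase_sin_diff_iff:
  "(\<exists>a b. a \<noteq> b \<and> sin (magic_phase t a - magic_phase t b) = 0) \<longleftrightarrow>
    (\<exists>j\<in>{1..3::nat}. \<exists>k\<in>{1..3::nat}. j \<noteq> k \<and>
      ((\<exists>n::int. t j - t k = of_int n * (pi / 2)) \<or>
       (\<exists>n::int. t j + t k = of_int n * (pi / 2))))"
proof -
  have "{1..3::nat} = {1, 2, 3}"
    by auto
  then show ?thesis
    unfolding ex_int_multiple_half_pi_iff ex_2x2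
    by (simp add: magic_phase_def algebra_simps) (smt (verit) sin_diff_eq_0_commute)
qed

theorem theorem5:
  fixes uA uB vA vB :: "complex^2^2" and t :: "nat \<Rightarrow> real"
  assumes "unitary uA" and "unitary uB" and "unitary vA" and "unitary vB"
  shows "gen_thermal_unitary
           (kron uA uB
            ** mexp (\<Sum>k\<in>{1..3}. cscale (\<i> * complex_of_real (t k)) (kron (pauli k) (pauli k)))
            ** kron (cadj vA) (cadj vB))
         \<longleftrightarrow> (\<exists>j\<in>{1..3::nat}. \<exists>k\<in>{1..3::nat}. j \<noteq> k \<and>
               ((\<exists>n::int. t j - t k = of_int n * (pi / 2)) \<or>
                (\<exists>n::int. t j + t k = of_int n * (pi / 2))))"
proof -
  let ?V = "magic ** diag_mat (\<lambda>a. cis (magic_phase t a)) ** cadj magic"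
  have "mexp (\<Sum>k\<in>{1..3}. cscale (\<i> * complex_of_real (t k)) (kron (pauli k) (pauli k))) = ?V"
    unfolding pauli_sum_magic_diag mexp_unitary_conj_diag[OF unitary_magic]
    by (simp add: cis_conv_exp)
  then have "gen_thermal_unitary
      (kron uA uB
       ** mexp (\<Sum>k\<in>{1..3}. cscale (\<i> * complex_of_real (t k)) (kron (pauli k) (pauli k)))
       ** kron (cadj vA) (cadj vB)) \<longleftrightarrow> gen_thermal_unitary ?V"
    using gen_thermal_unitary_local_unitaries_iff[OF assms] by simp
  also have "\<dots> \<longleftrightarrow>
      (\<exists>a b. a \<noteq> b \<and> Im (cis (magic_phase t a) * cnj (cis (magic_phase t b))) = 0)"
    by (rule gen_thermal_unitary_magic_diag_iff) simp
  also have "\<dots> \<longleftrightarrow> (\<exists>a b. a \<noteq> b \<and> sin (magic_phase t a - magic_phase t b) = 0)"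
    by (simp add: cis_cnj cis_mult)
  finally show ?thesis
    unfolding magic_phase_sin_diff_iff .
qed

end
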